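(* Let $s$ be a positive integer and let $a_0\ge a_1\ge\cdots\ge a_t\ge1$ be integers with $\sum_{i=0}^t a_i=s^2$. Let $$g=2\sum_{i=0}^t\sqrt{a_i}-2s.$$ Then $g\ge 2t\big(1-\frac1s\big)$. Moreover, if $a_0\ge a_1\ge 36$, then $g\ge 2t\big(1-\frac1s\big)+4$. *)

theory Defs
  imports Complex_Main
begin

end

theory Submission
  imports Defs
begin

text \<open>
  Put \<open>x\<^sub>i = \<surd>a\<^sub>i\<close>, so \<open>1 \<le> x\<^sub>i \<le> s\<close> and \<open>\<Sum> x\<^sub>i\<^sup>2 = s\<^sup>2\<close>. Each term
  \<open>(x\<^sub>i - 1)(s - x\<^sub>i)\<close> is nonnegative, and summing them gives
  \<open>(s + 1)(\<Sum> x\<^sub>i - s) = t s + \<Sum> (x\<^sub>i - 1)(s - x\<^sub>i) \<ge> t s\<close>,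
  whence \<open>\<Sum> x\<^sub>i - s \<ge> t s/(s + 1) \<ge> t (1 - 1/s)\<close>. If two of the \<open>x\<^sub>i\<close> are at
  least 6, their two terms together contribute at least \<open>2(s + 1)\<close>, which adds 2.
\<close>

lemma sum_excess_eq:
  fixes x :: "'a \<Rightarrow> real"
  assumes "finite I" and "(\<Sum>i\<in>I. (x i)\<^sup>2) = S\<^sup>2"
  shows "(S + 1) * ((\<Sum>i\<in>I. x i) - S)
         = (real (card I) - 1) * S + (\<Sum>i\<in>I. (x i - 1) * (S - x i))"
proof -
  have "(\<Sum>i\<in>I. (x i - 1) * (S - x i)) = (S + 1) * (\<Sum>i\<in>I. x i) - real (card I) * S - (\<Sum>i\<in>I. (x i)\<^sup>2)"
    by (simp add: algebra_simps power2_eq_square sum_subtractf sum.distrib sum_distrib_left)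
  then show ?thesis
    using assms(2) by (simp add: algebra_simps power2_eq_square)
qed

lemma le_of_sum_squares_eq:
  fixes x :: "'a \<Rightarrow> real"
  assumes "finite I" "i \<in> I" "(\<Sum>i\<in>I. (x i)\<^sup>2) = S\<^sup>2" "S \<ge> 0"
  shows "x i \<le> S"
proof -
  have "(x i)\<^sup>2 \<le> S\<^sup>2"
    using member_le_sum[of i I "\<lambda>i. (x i)\<^sup>2"] assms by simp
  then show ?thesis
    using assms(4) abs_le_square_iff[of "x i" S] by simp
qed

lemma pair_excess_ge:
  fixes x y S :: real
  assumes "x \<ge> 6" "y \<ge> 6" "x\<^sup>2 + y\<^sup>2 \<le> S\<^sup>2" "S \<ge> 0"
  shows "2 * (S + 1) \<le> (x - 1) * (S - x) + (y - 1) * (S - y)"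
proof -
  have "S > 8"
  proof (rule ccontr)
    assume "\<not> S > 8"
    then have "S\<^sup>2 \<le> 8\<^sup>2"
      using assms(4) power_mono[of S 8 2] by simp
    moreover have "6\<^sup>2 \<le> x\<^sup>2" "6\<^sup>2 \<le> y\<^sup>2"
      using assms(1,2) power_mono[of "6::real" _ 2] by auto
    ultimately show False
      using assms(3) by simp
  qed
  show ?thesis
  proof (cases "x + y \<ge> S + 3")
    case True
    have "(S + 1) * (S + 3) \<le> (S + 1) * (x + y)"
      using True \<open>S > 8\<close> by (intro mult_left_mono) auto
    then show ?thesis
      using assms(3) by (simp add: algebra_simps power2_eq_square)
  next
    case False
    \<comment> \<open>twice the first product plus the second, together with \<open>x + y < S + 3\<close>
        and \<open>S > 8\<close>, is the bound\<close>
    have "0 \<le> (x - 6) * (y - 6)" "0 \<le> (x + y - 12) * (S + 3 - (x + y))"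
      using False assms by simp_all
    then show ?thesis
      using False \<open>S > 8\<close> by (simp add: algebra_simps power2_eq_square)
  qed
qed

lemma excess_ge_of_scaled:
  fixes S y k c :: real
  assumes "S > 0" "k \<ge> 0" "k * S + c * (S + 1) \<le> (S + 1) * y"
  shows "k * (1 - 1 / S) + c \<le> y"
proof -
  have "k * (1 - 1 / S) * (S + 1) = k * S - k / S"
    using assms(1) by (simp add: field_simps)
  also have "\<dots> \<le> k * S"
    using assms by simp
  finally have "(k * (1 - 1 / S) + c) * (S + 1) \<le> y * (S + 1)"
    using assms(3) by (simp add: algebra_simps)
  then show ?thesis
    using assms(1) by simp
qed

lemma sum_excess_ge:
  fixes x :: "'a \<Rightarrow> real"
  assumes "finite I" "I \<noteq> {}" "S > 0"
    and "\<And>i. i \<in> I \<Longrightarrow> 1 \<le> x i" and "(\<Sum>i\<in>I. (x i)\<^sup>2) = S\<^sup>2"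
  shows "(real (card I) - 1) * (1 - 1 / S) \<le> (\<Sum>i\<in>I. x i) - S"
proof -
  have "0 \<le> (\<Sum>i\<in>I. (x i - 1) * (S - x i))"
    using assms le_of_sum_squares_eq[of I _ x S] by (intro sum_nonneg) simp
  then have scaled: "(real (card I) - 1) * S + 0 * (S + 1) \<le> (S + 1) * ((\<Sum>i\<in>I. x i) - S)"
    using sum_excess_eq[OF assms(1,5)] by simp
  have "real (card I) - 1 \<ge> 0"
    using assms(1,2) by (simp add: Suc_le_eq card_gt_0_iff)
  from excess_ge_of_scaled[OF assms(3) this scaled] show ?thesis
    by simp
qed

lemma sum_excess_ge_two_large:
  fixes x :: "'a \<Rightarrow> real"
  assumes "finite I" "S > 0"
    and "\<And>i. i \<in> I \<Longrightarrow> 1 \<le> x i" and "(\<Sum>i\<in>I. (x i)\<^sup>2) = S\<^sup>2"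
    and "i \<in> I" "j \<in> I" "i \<noteq> j" "x i \<ge> 6" "x j \<ge> 6"
  shows "(real (card I) - 1) * (1 - 1 / S) + 2 \<le> (\<Sum>i\<in>I. x i) - S"
proof -
  let ?e = "\<lambda>k. (x k - 1) * (S - x k)"
  let ?R = "I - {i} - {j}"
  have split: "(\<Sum>k\<in>I. f k) = f i + f j + (\<Sum>k\<in>?R. f k)" for f :: "'a \<Rightarrow> real"
  proof -
    have "(\<Sum>k\<in>I. f k) = f i + (\<Sum>k\<in>I - {i}. f k)"
      using assms(1,5) by (rule sum.remove)
    also have "(\<Sum>k\<in>I - {i}. f k) = f j + (\<Sum>k\<in>?R. f k)"
      using assms(1,6,7) by (intro sum.remove) auto
    finally show ?thesis
      by simp
  qed
  have "(x i)\<^sup>2 + (x j)\<^sup>2 \<le> S\<^sup>2"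
    using split[of "\<lambda>k. (x k)\<^sup>2"] assms(4) sum_nonneg[of ?R "\<lambda>k. (x k)\<^sup>2"] by simp
  then have "2 * (S + 1) \<le> ?e i + ?e j"
    using assms(2,8,9) by (intro pair_excess_ge) simp_all
  moreover have "0 \<le> (\<Sum>k\<in>?R. ?e k)"
    using assms le_of_sum_squares_eq[of I _ x S] by (intro sum_nonneg) simp
  ultimately have scaled: "(real (card I) - 1) * S + 2 * (S + 1) \<le> (S + 1) * ((\<Sum>i\<in>I. x i) - S)"
    using sum_excess_eq[OF assms(1,4)] split[of ?e] by simp
  have "card I > 0"
    using assms(1,5) card_gt_0_iff by blast
  then have "real (card I) - 1 \<ge> 0"
    by simp
  from excess_ge_of_scaled[OF assms(2) this scaled] show ?thesis .
qed

theorem lemma4p3: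
  fixes s t :: nat and a :: "nat \<Rightarrow> nat"
  assumes s_pos: "s > 0"
    and mono: "\<And>i. i < t \<Longrightarrow> a i \<ge> a (Suc i)"
    and pos: "\<And>i. i \<le> t \<Longrightarrow> a i \<ge> 1"
    and sum_eq: "(\<Sum>i\<le>t. a i) = s ^ 2"
  shows "2 * (\<Sum>i\<le>t. sqrt (real (a i))) - 2 * real s \<ge> 2 * real t * (1 - 1 / real s)
         \<and> (t \<ge> 1 \<longrightarrow> a 0 \<ge> a 1 \<longrightarrow> a 1 \<ge> 36 \<longrightarrow>
         2 * (\<Sum>i\<le>t. sqrt (real (a i))) - 2 * real s \<ge> 2 * real t * (1 - 1 / real s) + 4)"
proof -
  let ?x = "\<lambda>i. sqrt (real (a i))"
  have ge1: "\<And>i. i \<in> {..t} \<Longrightarrow> 1 \<le> ?x i"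
    using pos by simp
  have squares: "(\<Sum>i\<le>t. (?x i)\<^sup>2) = (real s)\<^sup>2"
    using arg_cong[OF sum_eq, of real] by simp
  have "real t * (1 - 1 / real s) \<le> (\<Sum>i\<le>t. ?x i) - real s"
    using sum_excess_ge[of "{..t}" "real s", OF _ _ _ ge1 squares] s_pos by simp
  moreover have "real t * (1 - 1 / real s) + 2 \<le> (\<Sum>i\<le>t. ?x i) - real s"
    if "t \<ge> 1" "a 0 \<ge> a 1" "a 1 \<ge> 36"
  proof -
    have "6 \<le> ?x 0" "6 \<le> ?x 1"
      using that by (simp_all add: real_le_rsqrt)
    from sum_excess_ge_two_large[of "{..t}" "real s", OF _ _ ge1 squares _ _ _ this]
    show ?thesis
      using s_pos that(1) by simp
  qed
  ultimately show ?thesis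
    by linarith
qed

end
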